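(* For $\alpha\in[0,1]$ let $P^{(\alpha)}_{ABC}$ be the distribution on $\{0,1\}^3$ with $P^{(\alpha)}_{ABC}(abc)=\alpha/2$ if $a=b=c$ and $(1-\alpha)/6$ otherwise. Then $P^{(\alpha)}_{ABC}$ is not compatible with the Triangle scenario for every $\alpha$ with $5/8<\alpha\le 1$.
   Context: The Triangle scenario is the causal structure with observed nodes $A,B,C$, latent nodes $X,Y,Z$ and edges $X\to A$, $X\to B$, $Y\to A$, $Y\to C$, $Z\to B$, $Z\to C$. A distribution $P_{ABC}$ is compatible with it if there exist distributions $P_X,P_Y,P_Z$ (latent variables of arbitrary cardinality) and conditionals $P_{A|XY},P_{B|XZ},P_{C|YZ}$ such that $P_{ABC}$ is the marginal of $P_XP_YP_ZP_{A|XY}P_{B|XZ}P_{C|YZ}$. *)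

theory Defs
  imports "HOL-Probability.Probability"
begin

text \<open>Observed variables A, B, C take values in {0,1}, represented by bool
  (False = 0, True = 1). A distribution on {0,1}^3 is a function
  bool => bool => bool => real.\<close>

definition P_alpha :: "real \<Rightarrow> bool \<Rightarrow> bool \<Rightarrow> bool \<Rightarrow> real" where
  "P_alpha \<alpha> a b c = (if a = b \<and> b = c then \<alpha> / 2 else (1 - \<alpha>) / 6)"

definition is_kernel :: "'s measure \<Rightarrow> ('s \<Rightarrow> bool \<Rightarrow> real) \<Rightarrow> bool" where
  "is_kernel M K \<longleftrightarrow>
     (\<forall>a. (\<lambda>s. K s a) \<in> borel_measurable M) \<and>
     (\<forall>s\<in>space M. \<forall>a. K s a \<ge> 0) \<and>
     (\<forall>s\<in>space M. K s True + K s False = 1)"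

definition triangle_compatible_with ::
  "'x measure \<Rightarrow> 'y measure \<Rightarrow> 'z measure \<Rightarrow> (bool \<Rightarrow> bool \<Rightarrow> bool \<Rightarrow> real) \<Rightarrow> bool" where
  "triangle_compatible_with MX MY MZ P \<longleftrightarrow>
     prob_space MX \<and> prob_space MY \<and> prob_space MZ \<and>
     (\<exists>(KA :: 'x \<times> 'y \<Rightarrow> bool \<Rightarrow> real) (KB :: 'x \<times> 'z \<Rightarrow> bool \<Rightarrow> real)
        (KC :: 'y \<times> 'z \<Rightarrow> bool \<Rightarrow> real).
        is_kernel (MX \<Otimes>\<^sub>M MY) KA \<and> is_kernel (MX \<Otimes>\<^sub>M MZ) KB \<and>
        is_kernel (MY \<Otimes>\<^sub>M MZ) KC \<and>
        (\<forall>a b c. P a b c =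
           (\<integral>w. (case w of (x, y, z) \<Rightarrow> KA (x, y) a * KB (x, z) b * KC (y, z) c)
              \<partial>(MX \<Otimes>\<^sub>M (MY \<Otimes>\<^sub>M MZ)))))"

end

theory Submission
  imports Defs
begin

text \<open>Write \<open>f\<close>, \<open>g\<close>, \<open>h\<close> for the probabilities that \<open>A\<close>, \<open>B\<close>, \<open>C\<close> output 1 given
  their latent parents. Then \<open>P(111) - P(010) = E[g (f + h - 1)]\<close>. Since \<open>B\<close> does not see \<open>Y\<close>,
  averaging over \<open>Y\<close> first replaces \<open>f\<close>, \<open>h\<close> by functions \<open>a(x)\<close>, \<open>c(z)\<close>, and
  \<open>g (a + c - 1) \<le> max 0 (a + c - 1) \<le> a c\<close>; by independence of \<open>X\<close> and \<open>Z\<close>,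
  \<open>E[a(X) c(Z)] = P(A=1) P(C=1)\<close>. For \<open>P_alpha \<alpha>\<close> this inequality reads
  \<open>(4\<alpha> - 1)/6 \<le> 1/4\<close>, i.e. \<open>\<alpha> \<le> 5/8\<close>.\<close>

lemma (in finite_measure) integrable_bounded_on_space:
  fixes f :: "'a \<Rightarrow> real"
  assumes "f \<in> borel_measurable M" and "\<And>x. x \<in> space M \<Longrightarrow> \<bar>f x\<bar> \<le> B"
  shows "integrable M f"
  using assms by (intro integrable_const_bound[where B = B] AE_I2) auto

lemma (in prob_space) integral_in_unit_interval:
  fixes f :: "'a \<Rightarrow> real"
  assumes "f \<in> borel_measurable M" and "\<And>x. x \<in> space M \<Longrightarrow> 0 \<le> f x \<and> f x \<le> 1"
  shows "0 \<le> integral\<^sup>L M f \<and> integral\<^sup>L M f \<le> 1"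
proof -
  have "integrable M f"
    using assms by (intro integrable_bounded_on_space[where B = 1]) auto
  then show ?thesis
    using assms by (auto intro!: integral_nonneg_AE integral_le_const AE_I2)
qed

lemma mult_sum_minus_one_le_mult:
  fixes a c g :: real
  assumes "0 \<le> a" "a \<le> 1" "0 \<le> c" "c \<le> 1" "0 \<le> g" "g \<le> 1"
  shows "g * (a + c - 1) \<le> a * c"
proof (cases "a + c \<le> 1")
  case True
  then show ?thesis
    using assms by (metis diff_le_0_iff_le mult_nonneg_nonneg mult_nonneg_nonpos order_trans)
next
  case False
  have "a + c - 1 \<le> a * c"
    using mult_nonneg_nonneg[of "1 - a" "1 - c"] assms by (simp add: algebra_simps)
  moreover have "g * (a + c - 1) \<le> a + c - 1"
    using False assms by (intro mult_left_le_one_le) auto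
  ultimately show ?thesis by linarith
qed

lemma is_kernel_measurable:
  "is_kernel M K \<Longrightarrow> (\<lambda>s. K s a) \<in> borel_measurable M"
  unfolding is_kernel_def by blast

lemma is_kernel_False:
  "is_kernel M K \<Longrightarrow> s \<in> space M \<Longrightarrow> K s False = 1 - K s True"
  unfolding is_kernel_def by force

lemma is_kernel_unit_interval:
  assumes "is_kernel M K" and "s \<in> space M"
  shows "0 \<le> K s a \<and> K s a \<le> 1"
proof -
  have "0 \<le> K s True" "0 \<le> K s False" "K s True + K s False = 1"
    using assms unfolding is_kernel_def by auto
  then show ?thesis by (cases a) auto
qed

locale triangle_latents =
  X: prob_space MX + Y: prob_space MY + Z: prob_space MZ
  for MX :: "'x measure" and MY :: "'y measure" and MZ :: "'z measure"
begin

abbreviation latent :: "('x \<times> 'y \<times> 'z) measure"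
  where "latent \<equiv> MX \<Otimes>\<^sub>M (MY \<Otimes>\<^sub>M MZ)"

sublocale YZ: pair_prob_space MY MZ ..

sublocale XYZ: pair_prob_space MX "MY \<Otimes>\<^sub>M MZ" ..

lemma integrable_latent_bounded:
  fixes G :: "'x \<times> 'y \<times> 'z \<Rightarrow> real"
  assumes "G \<in> borel_measurable latent"
    and "\<And>x y z. x \<in> space MX \<Longrightarrow> y \<in> space MY \<Longrightarrow> z \<in> space MZ \<Longrightarrow> \<bar>G (x, y, z)\<bar> \<le> B"
  shows "integrable latent G"
  using assms by (intro XYZ.integrable_bounded_on_space[where B = B]) (auto simp: space_pair_measure)

lemma integral_latent_cong:
  assumes "\<And>x y z. x \<in> space MX \<Longrightarrow> y \<in> space MY \<Longrightarrow> z \<in> space MZ \<Longrightarrow> F (x, y, z) = G (x, y, z)"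
  shows "integral\<^sup>L latent F = integral\<^sup>L latent G"
  using assms by (intro Bochner_Integration.integral_cong) (auto simp: space_pair_measure)

lemma integral_latent_iterated:
  fixes G :: "'x \<times> 'y \<times> 'z \<Rightarrow> real"
  assumes G[measurable]: "G \<in> borel_measurable latent"
    and bounded: "\<And>x y z. x \<in> space MX \<Longrightarrow> y \<in> space MY \<Longrightarrow> z \<in> space MZ \<Longrightarrow>
      \<bar>G (x, y, z)\<bar> \<le> B"
  shows "integral\<^sup>L latent G = (\<integral>x. (\<integral>z. (\<integral>y. G (x, y, z) \<partial>MY) \<partial>MZ) \<partial>MX)"
proof -
  have "integral\<^sup>L latent G = (\<integral>x. (\<integral>w. G (x, w) \<partial>(MY \<Otimes>\<^sub>M MZ)) \<partial>MX)"
    using XYZ.integral_fst'[OF integrable_latent_bounded[OF G bounded]] by simp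
  also have "\<dots> = (\<integral>x. (\<integral>z. (\<integral>y. G (x, y, z) \<partial>MY) \<partial>MZ) \<partial>MX)"
  proof (intro Bochner_Integration.integral_cong refl)
    fix x assume x: "x \<in> space MX"
    have "integrable (MY \<Otimes>\<^sub>M MZ) (\<lambda>w. G (x, w))"
      using x bounded by (intro YZ.integrable_bounded_on_space[where B = B])
        (auto simp: space_pair_measure)
    then show "(\<integral>w. G (x, w) \<partial>(MY \<Otimes>\<^sub>M MZ)) = (\<integral>z. (\<integral>y. G (x, y, z) \<partial>MY) \<partial>MZ)"
      using YZ.integral_snd[of "\<lambda>y z. G (x, y, z)"] by (simp add: case_prod_beta')
  qed
  finally show ?thesis .
qed

lemma integral_mixed_le_product:
  fixes f :: "'x \<times> 'y \<Rightarrow> real" and g :: "'x \<times> 'z \<Rightarrow> real" and h :: "'y \<times> 'z \<Rightarrow> real"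
  assumes [measurable]: "f \<in> borel_measurable (MX \<Otimes>\<^sub>M MY)"
      "g \<in> borel_measurable (MX \<Otimes>\<^sub>M MZ)" "h \<in> borel_measurable (MY \<Otimes>\<^sub>M MZ)"
    and f01: "\<And>x y. x \<in> space MX \<Longrightarrow> y \<in> space MY \<Longrightarrow> 0 \<le> f (x, y) \<and> f (x, y) \<le> 1"
    and g01: "\<And>x z. x \<in> space MX \<Longrightarrow> z \<in> space MZ \<Longrightarrow> 0 \<le> g (x, z) \<and> g (x, z) \<le> 1"
    and h01: "\<And>y z. y \<in> space MY \<Longrightarrow> z \<in> space MZ \<Longrightarrow> 0 \<le> h (y, z) \<and> h (y, z) \<le> 1"
  shows "(\<integral>(x, y, z). g (x, z) * (f (x, y) + h (y, z) - 1) \<partial>latent)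
    \<le> (\<integral>(x, y, z). f (x, y) \<partial>latent) * (\<integral>(x, y, z). h (y, z) \<partial>latent)"
proof -
  define a where "a x = (\<integral>y. f (x, y) \<partial>MY)" for x
  define c where "c z = (\<integral>y. h (y, z) \<partial>MY)" for z
  have [measurable]: "a \<in> borel_measurable MX"
    unfolding a_def by (rule Y.borel_measurable_lebesgue_integral) measurable
  have "(\<lambda>(z, y). h (y, z)) \<in> borel_measurable (MZ \<Otimes>\<^sub>M MY)"
    by measurable
  then have [measurable]: "c \<in> borel_measurable MZ"
    unfolding c_def by (rule Y.borel_measurable_lebesgue_integral[where f = "\<lambda>z y. h (y, z)", simplified])
  have f_section: "(\<lambda>y. f (x, y)) \<in> borel_measurable MY" if "x \<in> space MX" for x
    using that by (rule measurable_Pair2[rotated]) measurable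
  have h_section: "(\<lambda>y. h (y, z)) \<in> borel_measurable MY" if "z \<in> space MZ" for z
    using that by (rule measurable_Pair1[rotated]) measurable
  have f_integrable: "integrable MY (\<lambda>y. f (x, y))" and a01: "0 \<le> a x \<and> a x \<le> 1"
    if "x \<in> space MX" for x
    using that f01 f_section unfolding a_def
    by (auto intro!: Y.integrable_bounded_on_space[where B = 1] Y.integral_in_unit_interval[THEN conjunct1]
        Y.integral_in_unit_interval[THEN conjunct2])
  have h_integrable: "integrable MY (\<lambda>y. h (y, z))" and c01: "0 \<le> c z \<and> c z \<le> 1"
    if "z \<in> space MZ" for z
    using that h01 h_section unfolding c_def
    by (auto intro!: Y.integrable_bounded_on_space[where B = 1] Y.integral_in_unit_interval[THEN conjunct1]
        Y.integral_in_unit_interval[THEN conjunct2])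
  have weighted_bound: "\<bar>w * (s + t - 1)\<bar> \<le> 1"
    if "0 \<le> w \<and> w \<le> 1" "0 \<le> s \<and> s \<le> 1" "0 \<le> t \<and> t \<le> 1" for w s t :: real
    using that mult_le_one[of "\<bar>w\<bar>" "\<bar>s + t - 1\<bar>"] by (simp add: abs_mult abs_le_iff)
  have average_over_y: "(\<integral>y. f (x, y) + h (y, z) - 1 \<partial>MY) = a x + c z - 1"
    if "x \<in> space MX" "z \<in> space MZ" for x z
    using f_integrable[OF that(1)] h_integrable[OF that(2)] by (simp add: a_def c_def Y.prob_space)
  have "(\<integral>(x, y, z). g (x, z) * (f (x, y) + h (y, z) - 1) \<partial>latent)
      = (\<integral>(x, y, z). g (x, z) * (a x + c z - 1) \<partial>latent)"
    using f01 g01 h01 a01 c01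
    by (subst (1 2) integral_latent_iterated[where B = 1])
      (auto intro!: weighted_bound Bochner_Integration.integral_cong simp: average_over_y Y.prob_space)
  also have "\<dots> \<le> (\<integral>(x, y, z). a x * c z \<partial>latent)"
  proof (rule integral_mono)
    show "integrable latent (\<lambda>(x, y, z). g (x, z) * (a x + c z - 1))"
      using g01 a01 c01 by (intro integrable_latent_bounded[where B = 1]) (auto intro!: weighted_bound)
    show "integrable latent (\<lambda>(x, y, z). a x * c z)"
      using a01 c01 by (intro integrable_latent_bounded[where B = 1]) (auto simp: abs_mult intro!: mult_le_one)
    show "(case w of (x, y, z) \<Rightarrow> g (x, z) * (a x + c z - 1)) \<le> (case w of (x, y, z) \<Rightarrow> a x * c z)"
      if "w \<in> space latent" for w
      using that g01 a01 c01 by (auto simp: space_pair_measure intro!: mult_sum_minus_one_le_mult)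
  qed
  also have "\<dots> = (\<integral>x. a x \<partial>MX) * (\<integral>z. c z \<partial>MZ)"
    using a01 c01
    by (subst integral_latent_iterated[where B = 1])
      (auto simp: abs_mult Y.prob_space intro!: mult_le_one)
  also have "\<dots> = (\<integral>(x, y, z). f (x, y) \<partial>latent) * (\<integral>(x, y, z). h (y, z) \<partial>latent)"
    using f01 h01
    by (subst (1 2) integral_latent_iterated[where B = 1])
      (auto simp: a_def[abs_def] c_def[abs_def] X.prob_space Z.prob_space)
  finally show ?thesis .
qed

end

lemma triangle_compatible_inequality:
  assumes "triangle_compatible_with MX MY MZ P"
  shows "P True True True - P False True False
    \<le> (\<Sum>b\<in>UNIV. \<Sum>c\<in>UNIV. P True b c) * (\<Sum>a\<in>UNIV. \<Sum>b\<in>UNIV. P a b True)"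
proof -
  obtain KA KB KC where latents: "prob_space MX" "prob_space MY" "prob_space MZ"
    and kA: "is_kernel (MX \<Otimes>\<^sub>M MY) KA" and kB: "is_kernel (MX \<Otimes>\<^sub>M MZ) KB"
    and kC: "is_kernel (MY \<Otimes>\<^sub>M MZ) KC"
    and P: "\<And>a b c. P a b c = (\<integral>(x, y, z). KA (x, y) a * KB (x, z) b * KC (y, z) c
      \<partial>(MX \<Otimes>\<^sub>M (MY \<Otimes>\<^sub>M MZ)))"
    using assms unfolding triangle_compatible_with_def by blast
  interpret triangle_latents MX MY MZ
    using latents by (rule triangle_latents.intro)
  note [measurable] = is_kernel_measurable[OF kA] is_kernel_measurable[OF kB] is_kernel_measurable[OF kC]
  have A01: "0 \<le> KA (x, y) a \<and> KA (x, y) a \<le> 1" and A_False: "KA (x, y) False = 1 - KA (x, y) True"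
    if "x \<in> space MX" "y \<in> space MY" for x y a
    using that is_kernel_unit_interval[OF kA] is_kernel_False[OF kA] by (auto simp: space_pair_measure)
  have B01: "0 \<le> KB (x, z) b \<and> KB (x, z) b \<le> 1" and B_False: "KB (x, z) False = 1 - KB (x, z) True"
    if "x \<in> space MX" "z \<in> space MZ" for x z b
    using that is_kernel_unit_interval[OF kB] is_kernel_False[OF kB] by (auto simp: space_pair_measure)
  have C01: "0 \<le> KC (y, z) c \<and> KC (y, z) c \<le> 1" and C_False: "KC (y, z) False = 1 - KC (y, z) True"
    if "y \<in> space MY" "z \<in> space MZ" for y z c
    using that is_kernel_unit_interval[OF kC] is_kernel_False[OF kC] by (auto simp: space_pair_measure)
  define T where "T a b c = (\<lambda>(x, y, z). KA (x, y) a * KB (x, z) b * KC (y, z) c)" for a b c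
  have T_integrable: "integrable latent (T a b c)" for a b c
    unfolding T_def using A01 B01 C01
    by (intro integrable_latent_bounded[where B = 1]) (auto simp: abs_mult intro!: mult_le_one)
  have P_T: "P a b c = integral\<^sup>L latent (T a b c)" for a b c
    unfolding P T_def ..
  have "(\<Sum>b\<in>UNIV. \<Sum>c\<in>UNIV. P True b c) = (\<integral>(x, y, z). KA (x, y) True \<partial>latent)"
  proof -
    have "(\<Sum>b\<in>UNIV. \<Sum>c\<in>UNIV. P True b c)
        = (\<integral>w. T True True True w + T True True False w + T True False True w + T True False False w \<partial>latent)"
      by (simp add: P_T T_integrable UNIV_bool)
    also have "\<dots> = (\<integral>(x, y, z). KA (x, y) True \<partial>latent)"
      unfolding T_def by (rule integral_latent_cong) (simp add: B_False C_False algebra_simps)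
    finally show ?thesis .
  qed
  moreover have "(\<Sum>a\<in>UNIV. \<Sum>b\<in>UNIV. P a b True) = (\<integral>(x, y, z). KC (y, z) True \<partial>latent)"
  proof -
    have "(\<Sum>a\<in>UNIV. \<Sum>b\<in>UNIV. P a b True)
        = (\<integral>w. T True True True w + T True False True w + T False True True w + T False False True w \<partial>latent)"
      by (simp add: P_T T_integrable UNIV_bool)
    also have "\<dots> = (\<integral>(x, y, z). KC (y, z) True \<partial>latent)"
      unfolding T_def by (rule integral_latent_cong) (simp add: A_False B_False algebra_simps)
    finally show ?thesis .
  qed
  moreover have "P True True True - P False True False
      = (\<integral>(x, y, z). KB (x, z) True * (KA (x, y) True + KC (y, z) True - 1) \<partial>latent)"
  proof -
    have "P True True True - P False True False = (\<integral>w. T True True True w - T False True False w \<partial>latent)"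
      by (simp add: P_T T_integrable)
    also have "\<dots> = (\<integral>(x, y, z). KB (x, z) True * (KA (x, y) True + KC (y, z) True - 1) \<partial>latent)"
      unfolding T_def by (rule integral_latent_cong) (simp add: A_False C_False algebra_simps)
    finally show ?thesis .
  qed
  moreover have "(\<integral>(x, y, z). KB (x, z) True * (KA (x, y) True + KC (y, z) True - 1) \<partial>latent)
      \<le> (\<integral>(x, y, z). KA (x, y) True \<partial>latent) * (\<integral>(x, y, z). KC (y, z) True \<partial>latent)"
    using A01 B01 C01 by (intro integral_mixed_le_product) measurable
  ultimately show ?thesis
    by simp
qed

theorem mainTheorem8:
  fixes \<alpha> :: real
    and MX :: "'x measure" and MY :: "'y measure" and MZ :: "'z measure"
  assumes "5/8 < \<alpha>" and "\<alpha> \<le> 1"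
  shows "\<not> triangle_compatible_with MX MY MZ (P_alpha \<alpha>)"
proof
  assume "triangle_compatible_with MX MY MZ (P_alpha \<alpha>)"
  then have "P_alpha \<alpha> True True True - P_alpha \<alpha> False True False
    \<le> (\<Sum>b\<in>UNIV. \<Sum>c\<in>UNIV. P_alpha \<alpha> True b c) * (\<Sum>a\<in>UNIV. \<Sum>b\<in>UNIV. P_alpha \<alpha> a b True)"
    by (rule triangle_compatible_inequality)
  then have "(4 * \<alpha> - 1) / 6 \<le> 1 / 4"
    by (simp add: P_alpha_def UNIV_bool field_simps)
  with assms(1) show False
    by simp
qed

end
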